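(* Let $u,v:\mathbb R\to\mathbb R^2$ be smooth $2\pi$-periodic maps with $[u(t),v(t)]=1$ and $u(t+2\pi/3)=v(t)$, $v(t+2\pi/3)=-u(t)-v(t)$ for all $t$. Let $c:\mathbb R\to\mathbb R^2$ be a $C^1$ curve such that the triangle $w_1(t)=u(t)+c(t)$, $w_2(t)=v(t)+c(t)$, $w_3(t)=-u(t)-v(t)+c(t)$ is horizontal, i.e. $[w_2-w_1,w_3']=[w_3-w_2,w_1']=[w_1-w_3,w_2']=0$ for all $t$. Set $p=[u,u']$, $q=[v,v']$, $r=[u',v]=[v',u]$. Then $$c'(t)=\tfrac13\big(p(t)-2q(t)+2r(t)\big)v(t)-\tfrac13\big(q(t)-2p(t)+2r(t)\big)u(t).$$ Furthermore, the monodromy condition $(w_1,w_2,w_3)(t+2\pi/3)=(w_2,w_3,w_1)(t)$ for all $t$ holds if and only if $$\int_0^{2\pi}\big(p-2q+2r\big)v-\big(q-2p+2r\big)u\,dt=0,$$ or, equivalently, if and only if $\int_0^{2\pi}[u'(t),v(t)]\,(v(t)-u(t))\,dt=0$.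
   Context: $[\cdot,\cdot]$ is the determinant of two plane vectors; primes denote derivatives in $t$. The triangle $(w_1,w_2,w_3)$ has centroid $c$ and oriented area $3/2$. *)

theory Defs
  imports "HOL-Analysis.Analysis"
begin

definition det2 :: "real^2 \<Rightarrow> real^2 \<Rightarrow> real" where
  "det2 a b = a$1 * b$2 - a$2 * b$1"

definition smooth_curve :: "(real \<Rightarrow> real^2) \<Rightarrow> bool" where
  "smooth_curve f \<longleftrightarrow> (\<exists>D :: nat \<Rightarrow> real \<Rightarrow> real^2. D 0 = f \<and>
      (\<forall>k t. (D k has_vector_derivative D (Suc k) t) (at t)))"

end

theory Submission
  imports Defs
begin

text \<open>Write D = (p - 2q + 2r) v - (q - 2p + 2r) u. Since [u,v] = 1, also [u',v] + [u,v'] = 0,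
  and the horizontality conditions [w3 - w2, w1'] = 0 and [w1 - w3, w2'] = 0 are two independent
  linear equations for c' whose solution is c' = D/3. The shift by 2 pi/3 acts on the frame as
  (u, v) \<mapsto> (v, -u - v) and leaves D invariant, so c' is 2 pi/3-periodic and
  k = c(t + 2 pi/3) - c(t) does not depend on t. The monodromy condition says k = 0, while the
  integral of D over [0, 2 pi] is 3 (c(2 pi) - c(0)) = 9 k. Finally D - 3 [u',v] (v - u) is of
  the form K(t + 2 pi/3) - K(t) for a 2 pi-periodic K, so it integrates to zero over a period.\<close>

lemma has_vector_derivative_shift_arg:
  fixes f :: "real \<Rightarrow> 'a::real_normed_vector"
  assumes "(f has_vector_derivative f') (at (x + s))"
  shows "((\<lambda>x. f (x + s)) has_vector_derivative f') (at x)"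
proof -
  have "((\<lambda>x. x + s) has_vector_derivative 1) (at x)"
    by (auto intro!: derivative_eq_intros)
  from vector_diff_chain_at[OF this assms] show ?thesis
    by (simp add: o_def)
qed

lemma has_vector_derivative_shift_unique:
  fixes f g :: "real \<Rightarrow> 'a::real_normed_vector"
  assumes "(f has_vector_derivative f') (at (t + s))" and "(g has_vector_derivative g') (at t)"
    and "\<And>x. f (x + s) = g x"
  shows "f' = g'"
proof -
  have "(g has_vector_derivative f') (at t)"
    using has_vector_derivative_shift_arg[OF assms(1)] assms(3) by simp
  with assms(2) show ?thesis
    using vector_derivative_unique_at by blast
qed

lemma shift_difference_constant:
  fixes f :: "real \<Rightarrow> 'a::real_normed_vector"
  assumes f': "\<And>t. (f has_vector_derivative f' t) (at t)" and "\<And>t. f' (t + s) = f' t"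
  shows "f (t + s) - f t = f s - f 0"
proof -
  have "((\<lambda>x. f (x + s) - f x) has_vector_derivative f' (x + s) - f' x) (at x)" for x
    by (intro has_vector_derivative_diff has_vector_derivative_shift_arg f')
  then have "((\<lambda>x. f (x + s) - f x) has_vector_derivative 0) (at x within UNIV)" for x
    using assms(2) by simp
  then obtain k where k: "\<And>x. f (x + s) - f x = k"
    using has_vector_derivative_zero_constant[of UNIV "\<lambda>x. f (x + s) - f x"] by auto
  show ?thesis
    using k[of t] k[of 0] by simp
qed

lemma has_integral_shift_invariant_derivative:
  fixes f :: "real \<Rightarrow> 'a::banach"
  assumes f': "\<And>t. (f has_vector_derivative f' t) (at t)" and "\<And>t. f' (t + s) = f' t"
    and "0 \<le> s"
  shows "(f' has_integral (real n *\<^sub>R (f s - f 0))) {0..real n * s}"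
proof -
  have "f (real n * s) - f 0 = real n *\<^sub>R (f s - f 0)"
  proof (induction n)
    case (Suc n)
    have "f (real (Suc n) * s) - f 0 = (f (real n * s + s) - f (real n * s)) + (f (real n * s) - f 0)"
      by (simp add: algebra_simps)
    also have "\<dots> = (f s - f 0) + real n *\<^sub>R (f s - f 0)"
      using shift_difference_constant[OF assms(1,2), of "real n * s"] Suc.IH by simp
    also have "\<dots> = real (Suc n) *\<^sub>R (f s - f 0)"
      by (simp add: algebra_simps)
    finally show ?case .
  qed simp
  moreover have "(f' has_integral (f (real n * s) - f 0)) {0..real n * s}"
    using \<open>0 \<le> s\<close>
    by (intro fundamental_theorem_of_calculus) (auto intro: has_vector_derivative_at_within f')
  ultimately show ?thesis by simp
qed

lemma has_integral_periodic_shift_diff: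
  fixes f :: "real \<Rightarrow> 'a::banach"
  assumes "continuous_on UNIV f" and periodic: "\<And>t. f (t + T) = f t" and "0 \<le> s" "s \<le> T"
  shows "((\<lambda>t. f (t + s) - f t) has_integral 0) {0..T}"
proof -
  have integrable: "f integrable_on {a..b}" for a b
    using assms(1) by (auto intro: integrable_continuous_interval continuous_on_subset)
  have "integral {0..T} (\<lambda>t. f (t + s)) = integral {s..T + s} f"
    using integral_shift_real_ivl[of s s "T + s" f] by simp
  also have "\<dots> = integral {s..T} f + integral {T..T + s} f"
    using assms(3,4) integrable
    by (intro Henstock_Kurzweil_Integration.integral_combine[symmetric]) auto
  also have "integral {T..T + s} f = integral {0..s} f"
    using integral_shift_real_ivl[of T T "T + s" f] periodic by simp
  also have "integral {s..T} f + integral {0..s} f = integral {0..T} f"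
    using assms(3,4) integrable
    by (subst add.commute, intro Henstock_Kurzweil_Integration.integral_combine) auto
  finally have "integral {0..T} (\<lambda>t. f (t + s)) = integral {0..T} f" .
  moreover have "(\<lambda>t. f (t + s)) integrable_on {0..T}"
    using integrable_shift_real_ivl[OF integrable, of s "s" "T + s"] by simp
  ultimately have "((\<lambda>t. f (t + s) - f t) has_integral integral {0..T} f - integral {0..T} f) {0..T}"
    using integrable by (metis has_integral_diff integrable_integral)
  then show ?thesis by simp
qed

lemma rotation_triple_periodic:
  fixes f g :: "real \<Rightarrow> 'a::ab_group_add"
  assumes f: "\<And>t. f (t + s) = g t" and g: "\<And>t. g (t + s) = - f t - g t"
  shows "f (t + 3 * s) = f t" and "g (t + 3 * s) = g t"
proof -
  have shift3: "t + 3 * s = t + s + s + s" by simp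
  show "f (t + 3 * s) = f t" "g (t + 3 * s) = g t"
    unfolding shift3 f g by simp_all
qed

lemma bounded_bilinear_det2: "bounded_bilinear det2"
  unfolding bilinear_conv_bounded_bilinear[symmetric] bilinear_def
  by (auto intro!: linearI simp: det2_def algebra_simps)

lemmas continuous_on_det2[continuous_intros] =
  bounded_bilinear.continuous_on[OF bounded_bilinear_det2]

lemma det2_derivatives_cancel:
  assumes "(f has_vector_derivative f') (at t)" "(g has_vector_derivative g') (at t)"
    and "\<And>t. det2 (f t) (g t) = d"
  shows "det2 f' (g t) + det2 (f t) g' = 0"
proof -
  have "((\<lambda>t. det2 (f t) (g t)) has_vector_derivative det2 (f t) g' + det2 f' (g t)) (at t)"
    using bounded_bilinear.has_vector_derivative[OF bounded_bilinear_det2 assms(1,2)] .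
  moreover have "((\<lambda>t. det2 (f t) (g t)) has_vector_derivative 0) (at t)"
    using assms(3) by simp
  ultimately show ?thesis
    using vector_derivative_unique_at by fastforce
qed

lemma smooth_curve_imp_C1_differentiable:
  assumes "smooth_curve f"
  shows "f C1_differentiable_on UNIV"
proof -
  obtain D where "D 0 = f" and D: "\<And>k t. (D k has_vector_derivative D (Suc k) t) (at t)"
    using assms unfolding smooth_curve_def by blast
  have "continuous_on UNIV (D 1)"
    using D[of 1] by (intro continuous_at_imp_continuous_on ballI has_vector_derivative_continuous) simp
  then show ?thesis
    unfolding C1_differentiable_on_def using D[of 0] \<open>D 0 = f\<close> by auto
qed

lemma vec2_eqI:
  fixes x y :: "'a^2"
  assumes "x $ 1 = y $ 1" and "x $ 2 = y $ 2"
  shows "x = y"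
  using assms by (simp add: vec_eq_iff forall_2)

definition drift :: "real^2 \<Rightarrow> real^2 \<Rightarrow> real^2 \<Rightarrow> real^2 \<Rightarrow> real^2" where
  "drift u v u' v' =
     (det2 u u' - 2 * det2 v v' + 2 * det2 u' v) *\<^sub>R v
   - (det2 v v' - 2 * det2 u u' + 2 * det2 u' v) *\<^sub>R u"

definition drift_corrector :: "real^2 \<Rightarrow> real^2 \<Rightarrow> real^2 \<Rightarrow> real^2" where
  "drift_corrector u v u' =
     (det2 u' v - 2 * det2 u u') *\<^sub>R u + (2 * det2 u' v - det2 u u') *\<^sub>R v"

lemma horizontal_centroid_velocity:
  fixes u v u' v' c' :: "real^2"
  assumes "det2 u v = 1" and "det2 u' v + det2 u v' = 0"
    and "det2 (u + 2 *\<^sub>R v) (u' + c') = 0" and "det2 (2 *\<^sub>R u + v) (v' + c') = 0"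
  shows "c' = (1/3) *\<^sub>R drift u v u' v'"
  using assms unfolding drift_def det2_def
  by (intro vec2_eqI) (simp_all, algebra+)

lemma drift_rotate:
  assumes "det2 u' v + det2 u v' = 0"
  shows "drift v (- u - v) v' (- u' - v') = drift u v u' v'"
  using assms unfolding drift_def det2_def
  by (intro vec2_eqI) (simp_all, algebra+)

lemma drift_eq_coboundary:
  assumes "det2 u' v + det2 u v' = 0"
  shows "drift u v u' v' =
    3 *\<^sub>R (det2 u' v *\<^sub>R (v - u)) + (drift_corrector v (- u - v) v' - drift_corrector u v u')"
  using assms unfolding drift_def drift_corrector_def det2_def
  by (intro vec2_eqI) (simp_all, algebra+)

locale rotating_frame =
  fixes s :: real and u v u' v' :: "real \<Rightarrow> real^2"
  assumes shift_nonneg: "0 \<le> s"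
    and has_derivative_u: "\<And>t. (u has_vector_derivative u' t) (at t)"
    and has_derivative_v: "\<And>t. (v has_vector_derivative v' t) (at t)"
    and continuous_u': "continuous_on UNIV u'"
    and continuous_v': "continuous_on UNIV v'"
    and unimodular: "\<And>t. det2 (u t) (v t) = 1"
    and rotate_u: "\<And>t. u (t + s) = v t"
    and rotate_v: "\<And>t. v (t + s) = - u t - v t"
begin

lemma wronskian: "det2 (u' t) (v t) + det2 (u t) (v' t) = 0"
  using has_derivative_u has_derivative_v unimodular by (rule det2_derivatives_cancel)

lemma rotate_u': "u' (t + s) = v' t"
  using has_derivative_u has_derivative_v rotate_u by (rule has_vector_derivative_shift_unique)

lemma rotate_v': "v' (t + s) = - u' t - v' t"
  using has_derivative_v _ rotate_v
  by (rule has_vector_derivative_shift_unique) (intro derivative_intros has_derivative_u has_derivative_v)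

lemma drift_frame_rotate:
  "drift (u (t + s)) (v (t + s)) (u' (t + s)) (v' (t + s)) = drift (u t) (v t) (u' t) (v' t)"
  unfolding rotate_u rotate_v rotate_u' rotate_v' using wronskian by (rule drift_rotate)

lemma continuous_on_frame:
  "continuous_on S u" "continuous_on S v" "continuous_on S u'" "continuous_on S v'"
  using has_derivative_u has_derivative_v continuous_u' continuous_v'
  by (auto intro: continuous_on_subset continuous_at_imp_continuous_on has_vector_derivative_continuous)

lemma integral_drift:
  "integral {0..3 * s} (\<lambda>t. drift (u t) (v t) (u' t) (v' t))
     = 3 *\<^sub>R integral {0..3 * s} (\<lambda>t. det2 (u' t) (v t) *\<^sub>R (v t - u t))"
proof -
  define K where "K t = drift_corrector (u t) (v t) (u' t)" for t
  have "((\<lambda>t. K (t + s) - K t) has_integral 0) {0..3 * s}"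
  proof (rule has_integral_periodic_shift_diff)
    show "continuous_on UNIV K"
      unfolding K_def drift_corrector_def
      by (intro continuous_intros continuous_on_frame)
    show "K (t + 3 * s) = K t" for t
      unfolding K_def rotation_triple_periodic[where f = u and g = v, OF rotate_u rotate_v]
        rotation_triple_periodic[where f = u' and g = v', OF rotate_u' rotate_v'] ..
  qed (use shift_nonneg in auto)
  moreover have "(\<lambda>t. det2 (u' t) (v t) *\<^sub>R (v t - u t)) integrable_on {0..3 * s}"
    by (intro integrable_continuous_interval continuous_intros continuous_on_frame)
  ultimately have "((\<lambda>t. 3 *\<^sub>R (det2 (u' t) (v t) *\<^sub>R (v t - u t)) + (K (t + s) - K t))
      has_integral 3 *\<^sub>R integral {0..3 * s} (\<lambda>t. det2 (u' t) (v t) *\<^sub>R (v t - u t)) + 0) {0..3 * s}"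
    by (intro has_integral_add has_integral_cmul integrable_integral)
  moreover have "drift (u t) (v t) (u' t) (v' t)
      = 3 *\<^sub>R (det2 (u' t) (v t) *\<^sub>R (v t - u t)) + (K (t + s) - K t)" for t
    unfolding K_def rotate_u rotate_v rotate_u' using wronskian by (rule drift_eq_coboundary)
  ultimately show ?thesis
    by (simp add: integral_unique)
qed

end

locale horizontal_triangle = rotating_frame +
  fixes c c' :: "real \<Rightarrow> real^2"
  assumes has_derivative_c: "\<And>t. (c has_vector_derivative c' t) (at t)"
    \<comment> \<open>[w3 - w2, w1'] = 0 and [w1 - w3, w2'] = 0, where w3 - w2 = -(u + 2v) and w1 - w3 = 2u + v\<close>
    and horizontal_1: "\<And>t. det2 (u t + 2 *\<^sub>R v t) (u' t + c' t) = 0"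
    and horizontal_2: "\<And>t. det2 (2 *\<^sub>R u t + v t) (v' t + c' t) = 0"
begin

lemma centroid_velocity: "c' t = (1/3) *\<^sub>R drift (u t) (v t) (u' t) (v' t)"
  using unimodular wronskian horizontal_1 horizontal_2 by (rule horizontal_centroid_velocity)

lemma rotate_c': "c' (t + s) = c' t"
  unfolding centroid_velocity drift_frame_rotate ..

lemma integral_drift_eq_displacement:
  "integral {0..3 * s} (\<lambda>t. drift (u t) (v t) (u' t) (v' t)) = 9 *\<^sub>R (c s - c 0)"
proof -
  have "(c' has_integral 3 *\<^sub>R (c s - c 0)) {0..3 * s}"
    using has_integral_shift_invariant_derivative[OF has_derivative_c rotate_c' shift_nonneg, of 3] by simp
  from has_integral_cmul[OF this, of 3]
  have "((\<lambda>t. 3 *\<^sub>R c' t) has_integral 9 *\<^sub>R (c s - c 0)) {0..3 * s}"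
    by simp
  then show ?thesis
    by (simp add: centroid_velocity integral_unique)
qed

lemma centroid_periodic_iff:
  "(\<forall>t. c (t + s) = c t) \<longleftrightarrow> integral {0..3 * s} (\<lambda>t. drift (u t) (v t) (u' t) (v' t)) = 0"
proof -
  have "(\<forall>t. c (t + s) = c t) \<longleftrightarrow> c s - c 0 = 0"
    using shift_difference_constant[OF has_derivative_c rotate_c'] by (metis add_0 eq_iff_diff_eq_0)
  then show ?thesis
    unfolding integral_drift_eq_displacement by simp
qed

end

theorem proposition4p3:
  fixes u v c :: "real \<Rightarrow> real^2"
  defines "w1 \<equiv> (\<lambda>t. u t + c t)"
      and "w2 \<equiv> (\<lambda>t. v t + c t)"
      and "w3 \<equiv> (\<lambda>t. - u t - v t + c t)"
      and "p \<equiv> (\<lambda>t. det2 (u t) (vector_derivative u (at t)))"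
      and "q \<equiv> (\<lambda>t. det2 (v t) (vector_derivative v (at t)))"
      and "r \<equiv> (\<lambda>t. det2 (vector_derivative u (at t)) (v t))"
  assumes su: "smooth_curve u" and sv: "smooth_curve v"
      and pu: "\<And>t. u (t + 2*pi) = u t" and pv: "\<And>t. v (t + 2*pi) = v t"
      and dt: "\<And>t. det2 (u t) (v t) = 1"
      and su3: "\<And>t. u (t + 2*pi/3) = v t"
      and sv3: "\<And>t. v (t + 2*pi/3) = - u t - v t"
      and c1: "c C1_differentiable_on UNIV"
      and h1: "\<And>t. det2 (w2 t - w1 t) (vector_derivative w3 (at t)) = 0"
      and h2: "\<And>t. det2 (w3 t - w2 t) (vector_derivative w1 (at t)) = 0"
      and h3: "\<And>t. det2 (w1 t - w3 t) (vector_derivative w2 (at t)) = 0"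
  shows "(\<forall>t. vector_derivative c (at t) =
            ((1/3) * (p t - 2 * q t + 2 * r t)) *\<^sub>R v t
          - ((1/3) * (q t - 2 * p t + 2 * r t)) *\<^sub>R u t)
       \<and> ((\<forall>t. w1 (t + 2*pi/3) = w2 t \<and> w2 (t + 2*pi/3) = w3 t \<and> w3 (t + 2*pi/3) = w1 t)
            \<longleftrightarrow> integral {0..2*pi} (\<lambda>t. (p t - 2 * q t + 2 * r t) *\<^sub>R v t
                                        - (q t - 2 * p t + 2 * r t) *\<^sub>R u t) = 0)
       \<and> ((\<forall>t. w1 (t + 2*pi/3) = w2 t \<and> w2 (t + 2*pi/3) = w3 t \<and> w3 (t + 2*pi/3) = w1 t)
            \<longleftrightarrow> integral {0..2*pi} (\<lambda>t. det2 (vector_derivative u (at t)) (v t) *\<^sub>R (v t - u t)) = 0)"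
proof -
  define u' v' c' where "u' t = vector_derivative u (at t)"
    and "v' t = vector_derivative v (at t)" and "c' t = vector_derivative c (at t)" for t
  have C1: "u C1_differentiable_on UNIV" "v C1_differentiable_on UNIV"
    using su sv by (simp_all add: smooth_curve_imp_C1_differentiable)
  have du: "(u has_vector_derivative u' t) (at t)" and dv: "(v has_vector_derivative v' t) (at t)"
    and dc: "(c has_vector_derivative c' t) (at t)" for t
    using C1 c1 unfolding C1_differentiable_on_eq u'_def v'_def c'_def
    by (auto simp: vector_derivative_works[symmetric])
  have horizontal: "det2 (u t + 2 *\<^sub>R v t) (u' t + c' t) = 0"
    "det2 (2 *\<^sub>R u t + v t) (v' t + c' t) = 0" for t
  proof -
    have "vector_derivative w1 (at t) = u' t + c' t" "vector_derivative w2 (at t) = v' t + c' t"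
      unfolding w1_def w2_def by (intro vector_derivative_at has_vector_derivative_add du dv dc)+
    then show "det2 (u t + 2 *\<^sub>R v t) (u' t + c' t) = 0" "det2 (2 *\<^sub>R u t + v t) (v' t + c' t) = 0"
      using h2[of t] h3[of t] unfolding w1_def w2_def w3_def by (simp_all add: det2_def algebra_simps)
  qed
  interpret horizontal_triangle "2*pi/3" u v u' v' c c'
    using du dv C1 dt su3 sv3 dc horizontal
    by unfold_locales (auto simp: C1_differentiable_on_eq u'_def v'_def)
  have monodromy_iff: "(\<forall>t. w1 (t + 2*pi/3) = w2 t \<and> w2 (t + 2*pi/3) = w3 t \<and> w3 (t + 2*pi/3) = w1 t)
      \<longleftrightarrow> (\<forall>t. c (t + 2*pi/3) = c t)"
    unfolding w1_def w2_def w3_def su3 sv3 by (auto simp: algebra_simps)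
  have drift_eq: "(p t - 2 * q t + 2 * r t) *\<^sub>R v t - (q t - 2 * p t + 2 * r t) *\<^sub>R u t
      = drift (u t) (v t) (u' t) (v' t)" for t
    unfolding p_def q_def r_def drift_def u'_def v'_def ..
  have velocity: "vector_derivative c (at t) = ((1/3) * (p t - 2 * q t + 2 * r t)) *\<^sub>R v t
      - ((1/3) * (q t - 2 * p t + 2 * r t)) *\<^sub>R u t" for t
    using centroid_velocity[of t] unfolding c'_def drift_eq[symmetric] by (simp add: scaleR_diff_right)
  have period: "3 * (2*pi/3) = 2*pi"
    by simp
  show ?thesis
    using velocity centroid_periodic_iff[unfolded period] integral_drift[unfolded period]
    unfolding monodromy_iff drift_eq u'_def[symmetric] by simp
qed

end
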